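(* Fix a slot $n$ and a state $(\mathbf x(n),\mathbf g(n))$ of the model in the context. Let $\pi\in\Pi$ choose the feasible withdrawal vector $\mathbf y(n)$ at slot $n$, let $\mathbf y^{MB}(n)$ be the withdrawal vector chosen by an MB policy at the same slot in the same state, and let $\mathbf D=\mathbf y^{MB}(n)-\mathbf y(n)\in\mathbb Z^{L+1}$. Then (a) if $\mathbf D=0$, $\pi$ has the MB property at time $n$; and (b) if $\pi$ has the MB property at time $n$, every component of $\mathbf D$ equals $0$, $+1$ or $-1$.
   Context: Model: slotted time; real queues $1,\dots,L$, dummy queue $0$, $K$ identical servers. In slot $n$ the state is $(\mathbf x(n),\mathbf g(n))$: $x_i(n)\in\mathbb Z_+$ queue lengths ($x_0=0$), $g_{i,j}(n)\in\{0,1\}$ connectivity of queue $i$ to server $j$, with $g_{0,j}=1$. A scheduling control $\mathbf q\in\{0,\dots,L\}^K$ assigns server $j$ to queue $q_j$ ($0$ = idle); it is feasible if $g_{q_j,j}=1$ for all $j$ and for each $i\ge1$ at most $x_i$ servers are assigned to $i$. Its withdrawal vector is $y_i=\#\{j:q_j=i\}$, $i=0,\dots,L$; feasible withdrawal vectors are those arising from feasible $\mathbf q$; their set is $\mathcal Y(\mathbf x,\mathbf g)$. A policy chooses at each slot a feasible withdrawal vector as a measurable function of the history; $\Pi$ is the set of policies. Updated sizes: $\hat x_i(n)=x_i(n)-y_i(n)$ (so $\hat x_0(n)=-y_0(n)$). Imbalance index: $\kappa_n(\pi)=\sum_{i=1}^{L}\sum_{j=i+1}^{L+1}(\hat x_{[i]}(n)-\hat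 x_{[j]}(n))$, where $[1],\dots,[L]$ order the real queues by non-increasing $\hat x$ and $[L+1]=0$. $\pi$ has the MB property at time $n$ if its $\mathbf y(n)$ minimizes $\kappa_n$ over $\mathcal Y(\mathbf x(n),\mathbf g(n))$; an MB policy has the MB property at every slot. *)

theory Defs
  imports Main
begin

(* Queues are indexed 0..L (0 = dummy queue), servers are indexed 0..K-1.
   x i : queue length of queue i;  g i j : connectivity of queue i to server j.
   A scheduling control q assigns server j (j < K) to queue q j. *)

definition feasible_control :: "nat \<Rightarrow> nat \<Rightarrow> (nat \<Rightarrow> nat) \<Rightarrow> (nat \<Rightarrow> nat \<Rightarrow> bool) \<Rightarrow> (nat \<Rightarrow> nat) \<Rightarrow> bool" where
  "feasible_control L K x g q \<longleftrightarrow>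
     (\<forall>j<K. q j \<le> L \<and> g (q j) j) \<and>
     (\<forall>i\<in>{1..L}. card {j. j < K \<and> q j = i} \<le> x i)"

definition withdrawal :: "nat \<Rightarrow> (nat \<Rightarrow> nat) \<Rightarrow> nat \<Rightarrow> nat" where
  "withdrawal K q i = card {j. j < K \<and> q j = i}"

definition feasible_W :: "nat \<Rightarrow> nat \<Rightarrow> (nat \<Rightarrow> nat) \<Rightarrow> (nat \<Rightarrow> nat \<Rightarrow> bool) \<Rightarrow> (nat \<Rightarrow> nat) set" where
  "feasible_W L K x g = {withdrawal K q | q. feasible_control L K x g q}"

(* updated sizes \<hat>x_i = x_i - y_i (with x_0 = 0, so \<hat>x_0 = -y_0) *)
definition xhat :: "(nat \<Rightarrow> nat) \<Rightarrow> (nat \<Rightarrow> nat) \<Rightarrow> nat \<Rightarrow> int" where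
  "xhat x y i = int (x i) - int (y i)"

(* imbalance index: the real queues sorted by non-increasing \<hat>x, followed by
   the dummy queue 0 in position L+1; list positions are 0-based here. *)
definition kappa :: "nat \<Rightarrow> (nat \<Rightarrow> nat) \<Rightarrow> (nat \<Rightarrow> nat) \<Rightarrow> int" where
  "kappa L x y =
     (let vs = rev (sort (map (xhat x y) [1..<L+1])) @ [xhat x y 0]
      in (\<Sum>i<L. \<Sum>j\<in>{i+1..L}. vs ! i - vs ! j))"

definition MB_at :: "nat \<Rightarrow> nat \<Rightarrow> (nat \<Rightarrow> nat) \<Rightarrow> (nat \<Rightarrow> nat \<Rightarrow> bool) \<Rightarrow> (nat \<Rightarrow> nat) \<Rightarrow> bool" where
  "MB_at L K x g y \<longleftrightarrow> y \<in> feasible_W L K x g \<and>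
     (\<forall>y'\<in>feasible_W L K x g. kappa L x y \<le> kappa L x y')"

end

theory Submission
  imports Defs "HOL-Library.Multiset"
begin

text \<open>
  Twice the imbalance index equals \<open>\<Sum>i,j\<ge>1 |x\<^sub>i - x\<^sub>j| + 2 \<Sum>i\<ge>1 x\<^sub>i - 2 L x\<^sub>0\<close>
  (in the updated sizes), which no longer refers to the sorted order. In this form one sees that
  moving a single server from queue \<open>u\<close> to queue \<open>a\<close> strictly lowers the index if \<open>u\<close> is the idle
  queue, and also if both are real queues whose updated sizes satisfy \<open>x\<^sub>a \<ge> x\<^sub>u + 2\<close>.

  Now let \<open>y\<close>, \<open>y'\<close> both be MB and suppose \<open>y'\<^sub>a \<ge> y\<^sub>a + 2\<close>. Following an alternating path of
  servers on which the two controls differ, one finds a queue \<open>u \<noteq> a\<close> with \<open>y'\<^sub>u < y\<^sub>u\<close> such that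
  \<open>y + e\<^sub>a - e\<^sub>u\<close> and \<open>y' - e\<^sub>a + e\<^sub>u\<close> are again feasible withdrawal vectors. Optimality of both
  forces \<open>a, u\<close> to be real queues with \<open>x\<^sub>a - y\<^sub>a \<le> x\<^sub>u - y\<^sub>u + 1\<close> and
  \<open>x\<^sub>u - y'\<^sub>u \<le> x\<^sub>a - y'\<^sub>a + 1\<close>, which contradicts \<open>y'\<^sub>a - y\<^sub>a \<ge> 2 > y'\<^sub>u - y\<^sub>u\<close>.
\<close>

definition spread :: "(nat \<Rightarrow> int) \<Rightarrow> nat set \<Rightarrow> int" where
  "spread v S = (\<Sum>i\<in>S. \<Sum>j\<in>S. \<bar>v i - v j\<bar>)"

definition imbalance :: "nat \<Rightarrow> (nat \<Rightarrow> int) \<Rightarrow> int" where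
  "imbalance L v = spread v {1..L} + 2 * (\<Sum>i\<in>{1..L}. v i) - 2 * int L * v 0"

lemma spread_insert:
  assumes "finite S" "a \<notin> S"
  shows "spread v (insert a S) = spread v S + 2 * (\<Sum>j\<in>S. \<bar>v a - v j\<bar>)"
  using assms by (simp add: spread_def sum.distrib abs_minus_commute algebra_simps)

lemma spread_cong: "(\<And>i. i \<in> S \<Longrightarrow> v i = w i) \<Longrightarrow> spread v S = spread w S"
  unfolding spread_def by (intro sum.cong) auto

lemma imbalance_transfer_between_queues:
  fixes v :: "nat \<Rightarrow> int"
  assumes a: "a \<in> {1..L}" and u: "u \<in> {1..L}" and "a \<noteq> u" and gap: "v u + 2 \<le> v a"
  shows "imbalance L (v(a := v a - 1, u := v u + 1)) < imbalance L v"
proof -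
  define v' where "v' = v(a := v a - 1, u := v u + 1)"
  define R where "R = {1..L} - {a, u}"
  have S: "{1..L} = insert a (insert u R)" and R: "finite R" "a \<notin> R" "u \<notin> R"
    using a u by (auto simp: R_def)
  have split: "spread w {1..L} = spread w R + 2 * \<bar>w a - w u\<bar> + 2 * (\<Sum>j\<in>R. \<bar>w a - w j\<bar> + \<bar>w u - w j\<bar>)"
    for w :: "nat \<Rightarrow> int"
    unfolding S using R \<open>a \<noteq> u\<close> by (simp add: spread_insert sum.distrib algebra_simps)
  have vR: "v' j = v j" if "j \<in> R" for j
    using that R by (auto simp: v'_def)
  have "(\<Sum>j\<in>R. \<bar>v' a - v' j\<bar> + \<bar>v' u - v' j\<bar>) \<le> (\<Sum>j\<in>R. \<bar>v a - v j\<bar> + \<bar>v u - v j\<bar>)"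
    using gap \<open>a \<noteq> u\<close> by (intro sum_mono) (auto simp: vR v'_def abs_if)
  moreover have "\<bar>v' a - v' u\<bar> < \<bar>v a - v u\<bar>"
    using gap \<open>a \<noteq> u\<close> by (simp add: v'_def)
  moreover have "spread v' R = spread v R"
    by (rule spread_cong) (rule vR)
  moreover have "(\<Sum>i\<in>{1..L}. v' i) = (\<Sum>i\<in>{1..L}. v i)"
    unfolding S using R \<open>a \<noteq> u\<close> sum.cong[OF refl vR] by (simp add: v'_def)
  moreover have "2 * int L * v' 0 = 2 * int L * v 0"
    using a u by (simp add: v'_def)
  ultimately show ?thesis
    unfolding imbalance_def v'_def[symmetric] split[of v] split[of v'] by (smt (verit))
qed

lemma imbalance_transfer_from_idle:
  fixes v :: "nat \<Rightarrow> int"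
  assumes a: "a \<in> {1..L}"
  shows "imbalance L (v(a := v a - 1, 0 := v 0 + 1)) < imbalance L v"
proof -
  define v' where "v' = v(a := v a - 1, 0 := v 0 + 1)"
  define R where "R = {1..L} - {a}"
  have S: "{1..L} = insert a R" and R: "finite R" "a \<notin> R" "0 \<notin> R" "card R = L - 1"
    using a by (auto simp: R_def)
  have vR: "v' j = v j" if "j \<in> R" for j
    using that R by (auto simp: v'_def R_def)
  have "(\<Sum>j\<in>R. \<bar>v' a - v' j\<bar>) \<le> (\<Sum>j\<in>R. \<bar>v a - v j\<bar> + 1)"
    using a R by (intro sum_mono) (auto simp: vR v'_def abs_if)
  also have "\<dots> = (\<Sum>j\<in>R. \<bar>v a - v j\<bar>) + int L - 1"
    using R a by (simp add: sum.distrib of_nat_diff)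
  moreover have "spread w {1..L} = spread w R + 2 * (\<Sum>j\<in>R. \<bar>w a - w j\<bar>)" for w
    unfolding S using R by (simp add: spread_insert)
  moreover have "spread v' R = spread v R"
    by (rule spread_cong) (rule vR)
  ultimately have "spread v' {1..L} \<le> spread v {1..L} + 2 * int L - 2"
    using vR by (simp add: sum.cong[OF refl vR])
  moreover have "(\<Sum>i\<in>{1..L}. v' i) = (\<Sum>i\<in>{1..L}. v i) - 1"
    unfolding S using R a sum.cong[OF refl vR] by (simp add: v'_def)
  moreover have "v' 0 = v 0 + 1"
    by (simp add: v'_def)
  ultimately show ?thesis
    unfolding imbalance_def v'_def[symmetric] by (simp add: algebra_simps)
qed

lemma sum_square_eq_twice_upper:
  fixes F :: "nat \<Rightarrow> nat \<Rightarrow> int"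
  assumes "\<And>i j. F i j = F j i" "\<And>i. F i i = 0"
  shows "(\<Sum>i<n. \<Sum>j<n. F i j) = 2 * (\<Sum>i<n. \<Sum>j\<in>{i+1..<n}. F i j)"
proof (induction n)
  case 0
  then show ?case by simp
next
  case (Suc n)
  have "{i+1..<Suc n} = insert n {i+1..<n}" if "i < n" for i
    using that by auto
  then have "(\<Sum>i<Suc n. \<Sum>j\<in>{i+1..<Suc n}. F i j) = (\<Sum>i<n. \<Sum>j\<in>{i+1..<n}. F i j) + (\<Sum>i<n. F i n)"
    by (simp add: sum.distrib)
  moreover have "(\<Sum>i<Suc n. \<Sum>j<Suc n. F i j) = (\<Sum>i<n. \<Sum>j<n. F i j) + 2 * (\<Sum>i<n. F i n)"
    using assms by (simp add: sum.distrib)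
  ultimately show ?case
    using Suc.IH by simp
qed

lemma sum_list_map_rev_sort:
  fixes h :: "'a::linorder \<Rightarrow> 'b::comm_monoid_add"
  shows "sum_list (map h (rev (sort xs))) = sum_list (map h xs)"
  by (metis mset_map mset_rev mset_sort sum_mset_sum_list)

lemma sum_list_map_upt_Suc: "sum_list (map f [1..<L+1]) = (\<Sum>i\<in>{1..L}. f i)"
  unfolding sum_set_upt_conv_sum_list_nat[symmetric] set_upt by (rule sum.cong) auto

lemma kappa_eq_imbalance: "2 * kappa L x y = imbalance L (xhat x y)"
proof -
  define v where "v = xhat x y"
  define l where "l = map v [1..<L+1]"
  define s where "s = rev (sort l)"
  have len: "length s = L"
    by (simp add: s_def l_def)
  have sorted: "s ! j \<le> s ! i" if "i < j" "j < L" for i j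
    using sorted_wrt_nth_less[of "(\<ge>)" s i j] that len sorted_sort[of l]
    by (simp add: s_def sorted_wrt_rev)
  have inner: "(\<Sum>j\<in>{i+1..L}. (s @ [v 0]) ! i - (s @ [v 0]) ! j)
      = (\<Sum>j\<in>{i+1..<L}. \<bar>s ! i - s ! j\<bar>) + (s ! i - v 0)" if "i < L" for i
  proof -
    have "{i+1..L} = insert L {i+1..<L}"
      using that by auto
    moreover have "(\<Sum>j\<in>{i+1..<L}. (s @ [v 0]) ! i - (s @ [v 0]) ! j) = (\<Sum>j\<in>{i+1..<L}. \<bar>s ! i - s ! j\<bar>)"
      using that sorted by (intro sum.cong) (auto simp: nth_append len)
    ultimately show ?thesis
      using that by (simp add: nth_append len)
  qed
  have "kappa L x y = (\<Sum>i<L. (\<Sum>j\<in>{i+1..<L}. \<bar>s ! i - s ! j\<bar>) + (s ! i - v 0))"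
    unfolding kappa_def Let_def v_def[symmetric] l_def[symmetric] s_def[symmetric]
    by (intro sum.cong) (simp_all only: lessThan_iff inner)
  also have "\<dots> = (\<Sum>i<L. \<Sum>j\<in>{i+1..<L}. \<bar>s ! i - s ! j\<bar>) + (\<Sum>i<L. s ! i) - int L * v 0"
    by (simp add: sum.distrib sum_subtractf)
  finally have "kappa L x y = (\<Sum>i<L. \<Sum>j\<in>{i+1..<L}. \<bar>s ! i - s ! j\<bar>) + (\<Sum>i<L. s ! i) - int L * v 0" .
  moreover have "(\<Sum>i<L. s ! i) = (\<Sum>i\<in>{1..L}. v i)"
  proof -
    have "(\<Sum>i<L. s ! i) = sum_list s"
      by (simp add: sum_list_sum_nth atLeast0LessThan len)
    also have "\<dots> = sum_list l"
      using sum_list_map_rev_sort[of id l] by (simp add: s_def)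
    finally show ?thesis
      by (simp only: l_def sum_list_map_upt_Suc)
  qed
  moreover have "2 * (\<Sum>i<L. \<Sum>j\<in>{i+1..<L}. \<bar>s ! i - s ! j\<bar>) = spread v {1..L}"
  proof -
    have "2 * (\<Sum>i<L. \<Sum>j\<in>{i+1..<L}. \<bar>s ! i - s ! j\<bar>) = (\<Sum>i<L. \<Sum>j<L. \<bar>s ! i - s ! j\<bar>)"
      by (rule sum_square_eq_twice_upper[symmetric]) auto
    also have "\<dots> = (\<Sum>a\<leftarrow>s. \<Sum>b\<leftarrow>s. \<bar>a - b\<bar>)"
      by (simp add: sum_list_sum_nth atLeast0LessThan len)
    also have "\<dots> = (\<Sum>a\<leftarrow>l. \<Sum>b\<leftarrow>l. \<bar>a - b\<bar>)"
      by (simp add: s_def sum_list_map_rev_sort)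
    also have "\<dots> = spread v {1..L}"
      by (simp only: spread_def l_def map_map o_def sum_list_map_upt_Suc)
    finally show ?thesis .
  qed
  ultimately show ?thesis
    by (simp add: imbalance_def v_def algebra_simps)
qed

lemma kappa_cong:
  assumes "\<And>i. i \<le> L \<Longrightarrow> y i = y' i"
  shows "kappa L x y = kappa L x y'"
proof -
  have "map (xhat x y) [1..<L+1] = map (xhat x y') [1..<L+1]" "xhat x y 0 = xhat x y' 0"
    using assms by (auto simp: xhat_def)
  then show ?thesis
    unfolding kappa_def by (simp only:)
qed

definition switch_on :: "nat set \<Rightarrow> (nat \<Rightarrow> nat) \<Rightarrow> (nat \<Rightarrow> nat) \<Rightarrow> nat \<Rightarrow> nat" where
  "switch_on J q q' j = (if j \<in> J then q' j else q j)"

lemma withdrawal_eq_sum: "int (withdrawal K q i) = (\<Sum>j<K. of_bool (q j = i))"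
  by (simp add: withdrawal_def Collect_conj_eq lessThan_def)

lemma withdrawal_fun_upd:
  assumes "j < K"
  shows "int (withdrawal K (q(j := b)) i) = int (withdrawal K q i) - of_bool (q j = i) + of_bool (b = i)"
proof -
  have "(\<Sum>k\<in>{..<K} - {j}. of_bool ((q(j := b)) k = i)) = (\<Sum>k\<in>{..<K} - {j}. of_bool (q k = i) :: int)"
    by (rule sum.cong) auto
  then show ?thesis
    using assms unfolding withdrawal_eq_sum
    by (simp add: sum.remove[of "{..<K}" j] del: sum_of_bool_eq)
qed

lemma withdrawal_switch_on_add:
  "int (withdrawal K (switch_on J q q') i) + int (withdrawal K (switch_on J q' q) i)
     = int (withdrawal K q i) + int (withdrawal K q' i)"
  unfolding withdrawal_eq_sum sum.distrib[symmetric]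
  by (rule sum.cong) (auto simp: switch_on_def)

lemma withdrawal_pos_imp_le:
  assumes "feasible_control L K x g q" "0 < withdrawal K q u"
  shows "u \<le> L"
proof -
  obtain j where "j < K" "q j = u"
    using assms(2) by (auto simp: withdrawal_def card_gt_0_iff)
  then show ?thesis
    using assms(1) by (auto simp: feasible_control_def)
qed

lemma switch_on_in_feasible_W:
  assumes "feasible_control L K x g q" "feasible_control L K x g q'"
    and "\<And>i. withdrawal K (switch_on J q q') i \<le> max (withdrawal K q i) (withdrawal K q' i)"
  shows "withdrawal K (switch_on J q q') \<in> feasible_W L K x g"
proof -
  have "feasible_control L K x g (switch_on J q q')"
    unfolding feasible_control_def
  proof (intro conjI allI impI ballI)
    fix j assume "j < K"
    then show "switch_on J q q' j \<le> L" "g (switch_on J q q' j) j"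
      using assms(1,2) by (auto simp: feasible_control_def switch_on_def)
  next
    fix i assume "i \<in> {1..L}"
    then have "withdrawal K q i \<le> x i" "withdrawal K q' i \<le> x i"
      using assms(1,2) by (auto simp: feasible_control_def withdrawal_def)
    then show "card {j. j < K \<and> switch_on J q q' j = i} \<le> x i"
      using assms(3)[of i] unfolding withdrawal_def[symmetric] le_max_iff_disj by linarith
  qed
  then show ?thesis
    by (auto simp: feasible_W_def)
qed

lemma exists_server_moved_to:
  assumes "withdrawal K q a < withdrawal K q' a"
  obtains j where "j < K" "q' j = a" "q j \<noteq> a"
proof -
  have "\<not> {j. j < K \<and> q' j = a} \<subseteq> {j. j < K \<and> q j = a}"
    using assms card_mono[of "{j. j < K \<and> q j = a}" "{j. j < K \<and> q' j = a}"]
    by (auto simp: withdrawal_def)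
  then show ?thesis
    using that by blast
qed

lemma exchange_path:
  assumes "withdrawal K q a < withdrawal K q' a"
  shows "\<exists>u J. u \<noteq> a \<and> withdrawal K q' u < withdrawal K q u \<and>
    (\<forall>i. int (withdrawal K (switch_on J q q') i) = int (withdrawal K q i) + of_bool (i = a) - of_bool (i = u))"
  using assms
proof (induction "card {j. j < K \<and> q j \<noteq> q' j}" arbitrary: q' a rule: less_induct)
  case less
  obtain j where j: "j < K" "q' j = a" "q j \<noteq> a"
    using less.prems by (rule exists_server_moved_to)
  define b where "b = q j"
  show ?case
  proof (cases "withdrawal K q' b < withdrawal K q b")
    case True
    have "switch_on {j} q q' = q(j := a)"
      using j by (auto simp: switch_on_def)
    then show ?thesis
      using True j withdrawal_fun_upd[OF \<open>j < K\<close>, of q a]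
      by (intro exI[of _ b] exI[of _ "{j}"]) (auto simp: b_def)
  next
    case False
    \<comment> \<open>let \<open>q'\<close> agree with \<open>q\<close> on server \<open>j\<close>: the surplus over \<open>q\<close> moves from \<open>a\<close> to \<open>b\<close>\<close>
    define q1 where "q1 = q'(j := b)"
    have w1: "int (withdrawal K q1 i) = int (withdrawal K q' i) - of_bool (a = i) + of_bool (b = i)" for i
      using withdrawal_fun_upd[OF \<open>j < K\<close>, of q' b i] j by (simp add: q1_def)
    have "{k. k < K \<and> q k \<noteq> q1 k} \<subset> {k. k < K \<and> q k \<noteq> q' k}"
      using j by (auto simp: q1_def b_def)
    then have "card {k. k < K \<and> q k \<noteq> q1 k} < card {k. k < K \<and> q k \<noteq> q' k}"
      by (rule psubset_card_mono[rotated]) simp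
    moreover have "withdrawal K q b < withdrawal K q1 b"
      using False w1[of b] j by (simp add: b_def)
    ultimately obtain u J where IH: "u \<noteq> b" "withdrawal K q1 u < withdrawal K q u"
      "\<And>i. int (withdrawal K (switch_on J q q1) i) = int (withdrawal K q i) + of_bool (i = b) - of_bool (i = u)"
      using less.hyps by blast
    have "u \<noteq> a"
      using IH(2) w1[of a] less.prems j by (auto simp: b_def)
    have "switch_on (insert j J) q q' = (switch_on J q q1)(j := a)" and "switch_on J q q1 j = b"
      using j by (auto simp: switch_on_def q1_def b_def)
    then have "int (withdrawal K (switch_on (insert j J) q q') i)
        = int (withdrawal K q i) + of_bool (i = a) - of_bool (i = u)" for i
      using withdrawal_fun_upd[OF \<open>j < K\<close>, of "switch_on J q q1" a i] IH(3)[of i] by auto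
    moreover have "withdrawal K q' u < withdrawal K q u"
      using IH w1[of u] \<open>u \<noteq> a\<close> by simp
    ultimately show ?thesis
      using \<open>u \<noteq> a\<close> by blast
  qed
qed

lemma MB_at_no_improving_transfer:
  assumes MB: "MB_at L K x g y" and z: "z \<in> feasible_W L K x g"
    and "a \<le> L" "u \<le> L" "a \<noteq> u"
    and zy: "\<And>i. int (z i) = int (y i) + of_bool (i = a) - of_bool (i = u)"
  shows "u \<noteq> 0" and "a \<noteq> 0 \<Longrightarrow> xhat x y a < xhat x y u + 2"
proof -
  define v where "v = xhat x y"
  have "imbalance L v \<le> imbalance L (xhat x z)"
    using MB z kappa_eq_imbalance[of L x y] kappa_eq_imbalance[of L x z]
    by (auto simp: MB_at_def v_def)
  moreover have "xhat x z = v(a := v a - 1, u := v u + 1)"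
    using zy \<open>a \<noteq> u\<close> by (auto simp: xhat_def v_def)
  ultimately have no_gain: "\<not> imbalance L (v(a := v a - 1, u := v u + 1)) < imbalance L v"
    by simp
  show "u \<noteq> 0"
  proof
    assume "u = 0"
    then show False
      using no_gain imbalance_transfer_from_idle[of a L v] \<open>a \<le> L\<close> \<open>a \<noteq> u\<close> by simp
  qed
  show "xhat x y a < xhat x y u + 2" if "a \<noteq> 0"
    using no_gain imbalance_transfer_between_queues[of a L u v] that \<open>u \<noteq> 0\<close>
      \<open>a \<le> L\<close> \<open>u \<le> L\<close> \<open>a \<noteq> u\<close> by (force simp: v_def)
qed

lemma MB_at_withdrawal_le_Suc:
  assumes MB: "MB_at L K x g y" and MB': "MB_at L K x g y'" and "a \<le> L"
  shows "y' a \<le> y a + 1"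
proof (rule ccontr)
  assume "\<not> y' a \<le> y a + 1"
  obtain q q' where q: "feasible_control L K x g q" "y = withdrawal K q"
    and q': "feasible_control L K x g q'" "y' = withdrawal K q'"
    using MB MB' by (auto simp: MB_at_def feasible_W_def)
  then have "withdrawal K q a < withdrawal K q' a"
    using \<open>\<not> y' a \<le> y a + 1\<close> by simp
  then obtain u J where "u \<noteq> a" and u: "withdrawal K q' u < withdrawal K q u"
    and p: "\<And>i. int (withdrawal K (switch_on J q q') i) = int (y i) + of_bool (i = a) - of_bool (i = u)"
    using exchange_path q(2) by blast
  have p': "int (withdrawal K (switch_on J q' q) i) = int (y' i) + of_bool (i = u) - of_bool (i = a)" for i
    using p[of i, unfolded q(2)] withdrawal_switch_on_add[of K J q q' i] unfolding q'(2) by linarith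
  have "u \<le> L"
    using u withdrawal_pos_imp_le[OF q(1)] by simp
  have "withdrawal K (switch_on J q q') \<in> feasible_W L K x g"
  proof (rule switch_on_in_feasible_W[OF q(1) q'(1)])
    fix i
    show "withdrawal K (switch_on J q q') i \<le> max (withdrawal K q i) (withdrawal K q' i)"
      using p[of i] q(2) q'(2) \<open>\<not> y' a \<le> y a + 1\<close> \<open>u \<noteq> a\<close>
      by (cases "i = a"; cases "i = u") auto
  qed
  from MB_at_no_improving_transfer[OF MB this \<open>a \<le> L\<close> \<open>u \<le> L\<close> \<open>u \<noteq> a\<close>[symmetric] p]
  have "u \<noteq> 0" and gap: "a \<noteq> 0 \<Longrightarrow> xhat x y a < xhat x y u + 2" .
  have "withdrawal K (switch_on J q' q) \<in> feasible_W L K x g"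
  proof (rule switch_on_in_feasible_W[OF q'(1) q(1)])
    fix i
    show "withdrawal K (switch_on J q' q) i \<le> max (withdrawal K q' i) (withdrawal K q i)"
      using p'[of i] q(2) q'(2) u \<open>u \<noteq> a\<close>
      by (cases "i = a"; cases "i = u") auto
  qed
  from MB_at_no_improving_transfer[OF MB' this \<open>u \<le> L\<close> \<open>a \<le> L\<close> \<open>u \<noteq> a\<close> p']
  have "a \<noteq> 0" and gap': "u \<noteq> 0 \<Longrightarrow> xhat x y' u < xhat x y' a + 2" .
  show False
    using gap gap' \<open>a \<noteq> 0\<close> \<open>u \<noteq> 0\<close> \<open>\<not> y' a \<le> y a + 1\<close> u q(2) q'(2)
    by (auto simp: xhat_def)
qed

theorem lemma1:
  fixes L K :: nat and x :: "nat \<Rightarrow> nat" and g :: "nat \<Rightarrow> nat \<Rightarrow> bool"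
    and y yMB :: "nat \<Rightarrow> nat"
  assumes "x 0 = 0"
    and "\<forall>j<K. g 0 j"
    and "y \<in> feasible_W L K x g"
    and "MB_at L K x g yMB"
  shows "((\<forall>i\<le>L. int (yMB i) - int (y i) = 0) \<longrightarrow> MB_at L K x g y) \<and>
         (MB_at L K x g y \<longrightarrow> (\<forall>i\<le>L. int (yMB i) - int (y i) \<in> {-1, 0, 1}))"
proof (intro conjI impI)
  assume "\<forall>i\<le>L. int (yMB i) - int (y i) = 0"
  then have "kappa L x y = kappa L x yMB"
    by (intro kappa_cong) auto
  then show "MB_at L K x g y"
    using assms(3,4) by (simp add: MB_at_def)
next
  assume MB: "MB_at L K x g y"
  show "\<forall>i\<le>L. int (yMB i) - int (y i) \<in> {-1, 0, 1}"
    using MB_at_withdrawal_le_Suc[OF MB assms(4)] MB_at_withdrawal_le_Suc[OF assms(4) MB]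
    by force
qed

end
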